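(* Let $G\in\mathfrak{Y}_n$ be an infinite finitely generated soluble group. Then $G$ is abelian.
   Context: $\mathfrak{Y}_n$ denotes the class of all groups $G$ (finite or infinite) such that $N_G(A)=A$ for every non-abelian subgroup $A\le G$. *)

theory Defs
  imports "HOL-Algebra.Algebra"
begin

definition Yn_group :: "('a, 'b) monoid_scheme \<Rightarrow> bool" where
  "Yn_group G \<longleftrightarrow> group G \<and>
     (\<forall>A. subgroup A G \<and> \<not> comm_group (G\<lparr>carrier := A\<rparr>) \<longrightarrow> normalizer G A = A)"

definition finitely_generated_group :: "('a, 'b) monoid_scheme \<Rightarrow> bool" where
  "finitely_generated_group G \<longleftrightarrow>
     (\<exists>S. finite S \<and> S \<subseteq> carrier G \<and> generate G S = carrier G)"

end

theory Submission
  imports Defs "HOL-Computational_Algebra.Primes"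
begin

text \<open>
  Suppose \<open>G\<close> is not abelian. As \<open>G\<close> is soluble and nontrivial, \<open>G' \<noteq> G\<close>; a subgroup
  containing \<open>G'\<close> is normal, so in a \<open>\<Y>\<^sub>n\<close>-group every proper one is abelian. This yields an
  abelian normal subgroup \<open>N\<close> and \<open>x\<close> acting nontrivially on \<open>N\<close> with \<open>G = N\<langle>x\<rangle>\<close> and
  \<open>x\<^sup>p \<in> N\<close> for a prime \<open>p\<close>; then \<open>z = x\<^sup>p\<close> is central.

  Put \<open>\<delta> a = a (x a x\<inverse>)\<inverse>\<close>. If \<open>M \<le> N\<close> is normalised by \<open>x\<close> and \<open>M\<langle>x\<rangle>\<close> is non-abelian, then
  \<open>a \<in> N\<close> normalises \<open>M\<langle>x\<rangle>\<close> as soon as \<open>\<delta> a\<close> lies in it, hence \<open>a \<in> M\<langle>x\<rangle>\<close>. With \<open>M = N\<^sup>k\<close>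
  and the congruence \<open>\<delta>\<^sup>p a \<equiv> a\<^bsup>1+(-1)\<^sup>p\<^esup>\<close> modulo \<open>N\<^sup>p\<close> this gives \<open>N = N\<^sup>k\<langle>z\<rangle>\<close> for some
  \<open>k \<ge> 2\<close>, and finite generation of \<open>N\<close> over \<open>\<langle>z\<rangle>\<close> turns this into \<open>N\<^sup>E \<le> \<langle>z\<rangle>\<close> for some
  \<open>E > 0\<close>. So \<open>z\<close> has infinite order, since otherwise \<open>N\<close> and \<open>G\<close> would be finite. Finally, for
  \<open>q = pE + 1\<close> the subgroup \<open>N\<^sup>q\<langle>x\<^sup>q\<rangle>\<close> is non-abelian and normalised by the central \<open>z\<close>, so
  it contains \<open>z\<close>; comparing \<open>E\<close>-th powers forces \<open>q\<close> to divide \<open>E\<close>, although \<open>0 < E < q\<close>.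
\<close>

context group begin

lemma inv_mult_cancel_left [simp]: "x \<in> carrier G \<Longrightarrow> y \<in> carrier G \<Longrightarrow> inv x \<otimes> (x \<otimes> y) = y"
  by (simp add: m_assoc[symmetric])

lemma mult_inv_cancel_left [simp]: "x \<in> carrier G \<Longrightarrow> y \<in> carrier G \<Longrightarrow> x \<otimes> (inv x \<otimes> y) = y"
  by (simp add: m_assoc[symmetric])

lemma conj_hom: "g \<in> carrier G \<Longrightarrow> (\<lambda>a. g \<otimes> a \<otimes> inv g) \<in> hom G G"
  by (intro homI) (simp_all add: m_assoc)

lemma conj_int_pow:
  assumes "g \<in> carrier G" "a \<in> carrier G"
  shows "g \<otimes> a [^] (n::int) \<otimes> inv g = (g \<otimes> a \<otimes> inv g) [^] n"
  using hom_int_pow[OF conj_hom[OF assms(1)] assms(2) is_group is_group] by simp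

lemma conj_eq_iff_commute:
  assumes "g \<in> carrier G" "h \<in> carrier G"
  shows "g \<otimes> h \<otimes> inv g = h \<longleftrightarrow> g \<otimes> h = h \<otimes> g"
  using assms by (metis inv_solve_right m_closed)

lemma int_pow_commute:
  assumes "a \<in> carrier G" "b \<in> carrier G" "a \<otimes> b = b \<otimes> a"
  shows "a [^] (i::int) \<otimes> b = b \<otimes> a [^] i"
proof -
  have "b \<otimes> a \<otimes> inv b = a" using conj_eq_iff_commute assms by simp
  then have "b \<otimes> a [^] i \<otimes> inv b = a [^] i" using conj_int_pow assms by simp
  then show ?thesis using conj_eq_iff_commute assms by simp
qed

lemma int_pow_div_mod:
  assumes "a \<in> carrier G"
  shows "a [^] (j::int) = (a [^] c) [^] (j div c) \<otimes> a [^] (j mod c)"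
proof -
  have "a [^] j = a [^] (c * (j div c) + j mod c)" by simp
  also have "\<dots> = a [^] (c * (j div c)) \<otimes> a [^] (j mod c)"
    using assms by (rule int_pow_mult)
  finally show ?thesis using assms by (simp add: int_pow_pow)
qed

lemma mem_normalizerI:
  assumes H: "H \<subseteq> carrier G" and g: "g \<in> carrier G"
    and conj: "\<And>h. h \<in> H \<Longrightarrow> g \<otimes> h \<otimes> inv g \<in> H"
    and conj_inv: "\<And>h. h \<in> H \<Longrightarrow> inv g \<otimes> h \<otimes> g \<in> H"
  shows "g \<in> normalizer G H"
proof -
  have "r_coset G (l_coset G g H) (inv g) = H"
  proof
    show "r_coset G (l_coset G g H) (inv g) \<subseteq> H"
      unfolding l_coset_def r_coset_def using conj by auto
    show "H \<subseteq> r_coset G (l_coset G g H) (inv g)"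
    proof
      fix h assume h: "h \<in> H"
      then have "h = g \<otimes> (inv g \<otimes> h \<otimes> g) \<otimes> inv g"
        using g H by (simp add: m_assoc subsetD)
      then show "h \<in> r_coset G (l_coset G g H) (inv g)"
        unfolding l_coset_def r_coset_def using conj_inv[OF h] by blast
    qed
  qed
  then show ?thesis
    unfolding normalizer_def stabilizer_def using g H by simp
qed

lemma normalizer_conj_mem:
  assumes H: "H \<subseteq> carrier G" and g: "g \<in> normalizer G H" and h: "h \<in> H"
  shows "g \<otimes> h \<otimes> inv g \<in> H"
proof -
  have "r_coset G (l_coset G g H) (inv g) = H"
    using g H unfolding normalizer_def stabilizer_def by simp
  moreover have "g \<otimes> h \<otimes> inv g \<in> r_coset G (l_coset G g H) (inv g)"
    unfolding l_coset_def r_coset_def using h by blast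
  ultimately show ?thesis by simp
qed

lemma commuting_mem_normalizer:
  assumes "H \<subseteq> carrier G" "g \<in> carrier G" "\<And>h. h \<in> H \<Longrightarrow> g \<otimes> h = h \<otimes> g"
  shows "g \<in> normalizer G H"
proof (rule mem_normalizerI[OF assms(1,2)])
  fix h assume h: "h \<in> H"
  then have hc: "h \<in> carrier G" using assms(1) by blast
  show "g \<otimes> h \<otimes> inv g \<in> H" using h hc assms by (simp add: m_assoc)
  have "inv g \<otimes> h \<otimes> g = inv g \<otimes> (g \<otimes> h)" using h hc assms by (simp add: m_assoc)
  then show "inv g \<otimes> h \<otimes> g \<in> H" using h hc assms(2) by simp
qed

lemma normal_mem_normalizer: "H \<lhd> G \<Longrightarrow> g \<in> carrier G \<Longrightarrow> g \<in> normalizer G H"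
  by (intro mem_normalizerI normal.inv_op_closed1 normal.inv_op_closed2)
    (auto dest: normal_imp_subgroup subgroup.subset)

lemma normal_if_derived_subset:
  assumes H: "subgroup H G" and D: "derived G (carrier G) \<subseteq> H"
  shows "H \<lhd> G"
proof -
  have "g \<otimes> h \<otimes> inv g \<in> H" if g: "g \<in> carrier G" and h: "h \<in> H" for g h
  proof -
    have hc: "h \<in> carrier G" using subgroup.mem_carrier[OF H h] .
    have "g \<otimes> h \<otimes> inv g \<otimes> inv h \<in> derived G (carrier G)"
      unfolding derived_def by (rule generate.incl) (use g hc in blast)
    moreover have "g \<otimes> h \<otimes> inv g = (g \<otimes> h \<otimes> inv g \<otimes> inv h) \<otimes> h"
      using g hc by (simp add: m_assoc)
    ultimately show ?thesis using D subgroup.m_closed[OF H _ h] by (metis subsetD)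
  qed
  then show ?thesis using H normal_inv_iff by blast
qed

lemma derived_ne_carrier:
  assumes "solvable G" "carrier G \<noteq> {\<one>}"
  shows "derived G (carrier G) \<noteq> carrier G"
proof
  assume eq: "derived G (carrier G) = carrier G"
  obtain n where "(derived G ^^ n) (carrier G) = {\<one>}"
    using assms(1) solvable_iff_trivial_derived_seq by blast
  moreover have "(derived G ^^ m) (carrier G) = carrier G" for m
    by (induction m) (use eq in auto)
  ultimately show False using assms(2) by simp
qed

lemma comm_group_subgroup_iff:
  assumes "subgroup A G"
  shows "comm_group (G\<lparr>carrier := A\<rparr>) \<longleftrightarrow> (\<forall>a\<in>A. \<forall>b\<in>A. a \<otimes> b = b \<otimes> a)"
proof
  assume "comm_group (G\<lparr>carrier := A\<rparr>)"
  then show "\<forall>a\<in>A. \<forall>b\<in>A. a \<otimes> b = b \<otimes> a"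
    using comm_groupE(4) by fastforce
next
  assume "\<forall>a\<in>A. \<forall>b\<in>A. a \<otimes> b = b \<otimes> a"
  then show "comm_group (G\<lparr>carrier := A\<rparr>)"
    by (intro group.group_comm_groupI) (use assms subgroup_imp_group in auto)
qed

lemma hom_generate_closed:
  assumes f: "f \<in> hom G G" and A: "A \<subseteq> carrier G"
    and fA: "\<And>a. a \<in> A \<Longrightarrow> f a \<in> generate G A"
    and l: "l \<in> generate G A"
  shows "f l \<in> generate G A"
  using l
proof (induction rule: generate.induct)
  case one
  show ?case using hom_one[OF f is_group is_group] generate.one by simp
next
  case (incl h)
  then show ?case using fA by simp
next
  case (inv h)
  then have "inv (f h) \<in> generate G A" using fA generate_m_inv_closed[OF A] by blast
  moreover have "f (inv h) = inv (f h)"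
    using f inv A by (intro group_hom.hom_inv) (auto simp: group_hom_def group_hom_axioms_def)
  ultimately show ?case by simp
next
  case (eng h1 h2)
  then show ?case using f generate_in_carrier[OF A] generate.eng by (simp add: hom_mult)
qed

lemma ord_ne_zero_if_int_pow_eq_one:
  assumes x: "x \<in> carrier G" and i: "x [^] (i::int) = \<one>" "i \<noteq> 0"
  shows "ord x \<noteq> 0"
proof -
  have "x [^] nat \<bar>i\<bar> = \<one>"
  proof (cases "0 \<le> i")
    case True
    then have "x [^] nat \<bar>i\<bar> = x [^] i" by (simp add: pow_nat)
    then show ?thesis using i by simp
  next
    case False
    then have "x [^] nat \<bar>i\<bar> = x [^] (- i)" by (simp add: pow_nat)
    then show ?thesis using i int_pow_neg[OF x, of i] by simp
  qed
  then have "ord x dvd nat \<bar>i\<bar>" using pow_eq_id[OF x] by blast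
  then show ?thesis using i(2) by (metis dvd_0_left nat_0_iff abs_ge_zero abs_eq_0 order_antisym)
qed

subsection \<open>Products of a subgroup with a cyclic group\<close>

definition join_powers :: "'a set \<Rightarrow> 'a \<Rightarrow> 'a set" where
  "join_powers M y = {m \<otimes> y [^] (j::int) | m j. m \<in> M}"

lemma join_powers_subgroup:
  assumes M: "subgroup M G" and y: "y \<in> normalizer G M"
  shows "subgroup (join_powers M y) G"
proof -
  have Mc: "M \<subseteq> carrier G" using subgroup.subset[OF M] .
  have yc: "y \<in> carrier G" using y unfolding normalizer_def stabilizer_def by simp
  have conj: "y [^] j \<otimes> m \<otimes> inv (y [^] j) \<in> M" if "m \<in> M" for m and j :: int
    using normalizer_conj_mem[OF Mc _ that]
      subgroup_int_pow_closed[OF normalizer_imp_subgroup[OF Mc] y] by blast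
  show ?thesis
  proof (rule subgroupI)
    show "join_powers M y \<subseteq> carrier G" using Mc yc by (auto simp: join_powers_def)
    have "\<one> \<otimes> y [^] (0::int) \<in> join_powers M y"
      unfolding join_powers_def using subgroup.one_closed[OF M] by blast
    then show "join_powers M y \<noteq> {}" by blast
  next
    fix a assume "a \<in> join_powers M y"
    then obtain m j where a: "a = m \<otimes> y [^] (j::int)" "m \<in> M" unfolding join_powers_def by blast
    have "m \<in> carrier G" using a(2) Mc by auto
    then have "inv a = (y [^] (-j) \<otimes> inv m \<otimes> inv (y [^] (-j))) \<otimes> y [^] (-j)"
      using a yc by (simp add: inv_mult_group m_assoc int_pow_neg)
    moreover have "y [^] (-j) \<otimes> inv m \<otimes> inv (y [^] (-j)) \<in> M"
      using conj subgroup.m_inv_closed[OF M a(2)] by simp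
    ultimately show "inv a \<in> join_powers M y" unfolding join_powers_def by blast
  next
    fix a b assume "a \<in> join_powers M y" "b \<in> join_powers M y"
    then obtain m j n k where a: "a = m \<otimes> y [^] (j::int)" "m \<in> M"
        and b: "b = n \<otimes> y [^] (k::int)" "n \<in> M" unfolding join_powers_def by blast
    have "m \<in> carrier G" "n \<in> carrier G" using a(2) b(2) Mc by auto
    then have "a \<otimes> b = (m \<otimes> (y [^] j \<otimes> n \<otimes> inv (y [^] j))) \<otimes> y [^] (j + k)"
      using a b yc by (simp add: m_assoc int_pow_mult)
    moreover have "m \<otimes> (y [^] j \<otimes> n \<otimes> inv (y [^] j)) \<in> M"
      using conj[OF b(2)] subgroup.m_closed[OF M a(2)] by simp
    ultimately show "a \<otimes> b \<in> join_powers M y" unfolding join_powers_def by blast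
  qed
qed

lemma mem_join_powers: "subgroup M G \<Longrightarrow> m \<in> M \<Longrightarrow> m \<in> join_powers M y"
  unfolding join_powers_def by (rule CollectI, rule exI[of _ m], rule exI[of _ 0])
    (simp add: subgroup.mem_carrier)

lemma generator_mem_join_powers: "subgroup M G \<Longrightarrow> y \<in> carrier G \<Longrightarrow> y \<in> join_powers M y"
  unfolding join_powers_def by (rule CollectI, rule exI[of _ \<one>], rule exI[of _ 1])
    (simp add: subgroup.one_closed)

lemma join_powers_subset:
  assumes "subgroup N G" "M \<subseteq> N" "y \<in> N"
  shows "join_powers M y \<subseteq> N"
  using assms subgroup.m_closed[OF assms(1) _ subgroup_int_pow_closed[OF assms(1,3)]]
  unfolding join_powers_def by blast

lemma join_powers_in_abelian:
  assumes N: "subgroup N G" and comm: "\<And>a b. a \<in> N \<Longrightarrow> b \<in> N \<Longrightarrow> a \<otimes> b = b \<otimes> a"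
    and H: "subgroup H G" "H \<subseteq> N" and g: "g \<in> N"
  shows "subgroup (join_powers H g) G" "join_powers H g \<subseteq> N"
proof -
  have "g \<in> normalizer G H"
    using H g comm subgroup.subset[OF N] by (intro commuting_mem_normalizer) (auto dest: subgroup.subset)
  then show "subgroup (join_powers H g) G" using join_powers_subgroup[OF H(1)] by blast
  show "join_powers H g \<subseteq> N" using join_powers_subset[OF N H(2) g] .
qed

lemma join_powers_commute:
  assumes M: "subgroup M G" and comm: "\<And>a b. a \<in> M \<Longrightarrow> b \<in> M \<Longrightarrow> a \<otimes> b = b \<otimes> a"
    and y: "y \<in> carrier G" and y_comm: "\<And>m. m \<in> M \<Longrightarrow> y \<otimes> m = m \<otimes> y"
    and u: "u \<in> join_powers M y" and v: "v \<in> join_powers M y"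
  shows "u \<otimes> v = v \<otimes> u"
proof -
  have Mc: "\<And>m. m \<in> M \<Longrightarrow> m \<in> carrier G" using subgroup.mem_carrier[OF M] .
  have mult: "m \<otimes> y [^] i \<otimes> (n \<otimes> y [^] j) = (m \<otimes> n) \<otimes> y [^] (i + j)"
    if "m \<in> M" "n \<in> M" for m n and i j :: int
  proof -
    have "y [^] i \<otimes> n = n \<otimes> y [^] i" using int_pow_commute[OF y Mc y_comm] that by blast
    then have "m \<otimes> (y [^] i \<otimes> (n \<otimes> y [^] j)) = m \<otimes> (n \<otimes> (y [^] i \<otimes> y [^] j))"
      using that Mc y by (metis int_pow_closed m_assoc)
    then show ?thesis using that Mc y by (simp add: m_assoc int_pow_mult)
  qed
  obtain m i where m: "m \<in> M" and ui: "u = m \<otimes> y [^] (i::int)" using u unfolding join_powers_def by blast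
  obtain n j where n: "n \<in> M" and vj: "v = n \<otimes> y [^] (j::int)" using v unfolding join_powers_def by blast
  show ?thesis unfolding ui vj mult[OF m n] mult[OF n m] using comm[OF m n] by (simp add: add.commute)
qed

lemma exists_pos_nat_pow_mem:
  assumes H: "subgroup H G" and x: "x \<in> carrier G" and i: "x [^] (i::int) \<in> H" "i \<noteq> 0"
  shows "\<exists>n::nat. 0 < n \<and> x [^] n \<in> H"
proof (cases "i > 0")
  case True
  then have "x [^] nat i = x [^] i" by (intro pow_nat) simp
  then show ?thesis using i True by (intro exI[of _ "nat i"]) simp
next
  case False
  then have "x [^] nat (-i) = x [^] (-i)" by (intro pow_nat) simp
  then have "x [^] nat (-i) = inv (x [^] i)" using int_pow_neg[OF x] by simp
  then show ?thesis using i False subgroup.m_inv_closed[OF H i(1)] by (intro exI[of _ "nat (-i)"]) simp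
qed

lemma int_pow_mem_imp_dvd:
  assumes H: "subgroup H G" and x: "x \<in> carrier G" and c: "0 < c" "x [^] c \<in> H"
    and c_min: "\<And>n. 0 < n \<Longrightarrow> n < c \<Longrightarrow> x [^] n \<notin> H" and j: "x [^] (j::int) \<in> H"
  shows "int c dvd j"
proof (rule ccontr)
  assume "\<not> int c dvd j"
  then have r: "0 < j mod int c" "j mod int c < int c"
    using c(1) pos_mod_sign[of "int c" j] by (auto simp: dvd_eq_mod_eq_0 order_le_less)
  have "x [^] (j mod int c) = inv ((x [^] int c) [^] (j div int c)) \<otimes> x [^] j"
    using int_pow_div_mod[OF x, of j "int c"] x by simp
  then have "x [^] (j mod int c) \<in> H"
    using c j subgroup.m_closed[OF H subgroup.m_inv_closed[OF H subgroup_int_pow_closed[OF H]]]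
    by (simp add: int_pow_int)
  moreover have "x [^] nat (j mod int c) = x [^] (j mod int c)" using r by (intro pow_nat) simp
  moreover have "nat (j mod int c) < c" using r by linarith
  ultimately show False using c_min[of "nat (j mod int c)"] r(1) by simp
qed

lemma mem_join_powers_pow_imp:
  assumes H: "subgroup H G" and x: "x \<in> carrier G" and xp: "x \<in> join_powers H (x [^] (p::nat))"
  shows "\<exists>j::int. x [^] (1 - int p * j) \<in> H"
proof -
  obtain h j where h: "h \<in> H" and xe: "x = h \<otimes> (x [^] p) [^] (j::int)"
    using xp unfolding join_powers_def by blast
  have "(x [^] p) [^] j = x [^] (int p * j)" using int_pow_pow[OF x, of "int p"] by (simp add: int_pow_int)
  then have "x [^] (1 - int p * j) = h"
    using xe h x subgroup.mem_carrier[OF H] int_pow_diff[OF x]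
    by (metis int_pow_1 int_pow_closed inv_solve_right)
  then show ?thesis using h by blast
qed

lemma exists_prime_not_mem_join_powers:
  assumes H: "subgroup H G" and x: "x \<in> carrier G" "x \<notin> H"
  shows "\<exists>p. normalization_semidom_class.prime (p::nat) \<and> x \<notin> join_powers H (x [^] p)"
proof (cases "\<exists>n::nat. 0 < n \<and> x [^] n \<in> H")
  case True
  define c where "c = (LEAST n::nat. 0 < n \<and> x [^] n \<in> H)"
  have c: "0 < c" "x [^] c \<in> H" using LeastI_ex[OF True] unfolding c_def by auto
  have c_min: "x [^] n \<notin> H" if "0 < n" "n < c" for n
    using that not_less_Least unfolding c_def by blast
  have "c \<noteq> 1" using c(2) x by auto
  then obtain p where p: "normalization_semidom_class.prime p" "p dvd c" using prime_factor_nat by blast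
  have "x \<notin> join_powers H (x [^] p)"
  proof
    assume "x \<in> join_powers H (x [^] p)"
    then obtain j where "x [^] (1 - int p * j) \<in> H" using mem_join_powers_pow_imp[OF H x(1)] by blast
    then have "int p dvd 1 - int p * j"
      using int_pow_mem_imp_dvd[OF H x(1) c c_min] p(2) dvd_trans by (meson int_dvd_int_iff)
    then have "int p dvd (1 - int p * j) + int p * j" by (rule dvd_add) simp
    then have "int p dvd 1" by simp
    then show False using p(1) by simp
  qed
  then show ?thesis using p(1) by blast
next
  case False
  have "x \<notin> join_powers H (x [^] (2::nat))"
  proof
    assume "x \<in> join_powers H (x [^] (2::nat))"
    then obtain j where j: "x [^] (1 - int 2 * j) \<in> H" using mem_join_powers_pow_imp[OF H x(1)] by blast
    have "1 - int 2 * j \<noteq> 0" by presburger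
    then show False using exists_pos_nat_pow_mem[OF H x(1) j] False by blast
  qed
  then show ?thesis using two_is_prime_nat by blast
qed

subsection \<open>Abelian groups finitely generated over a subgroup\<close>

lemma join_powers_finite:
  assumes H: "subgroup H G" "finite H" and g: "g \<in> carrier G" "g [^] (E::nat) \<in> H" "0 < E"
  shows "finite (join_powers H g)"
proof -
  have "join_powers H g \<subseteq> (\<lambda>(h, i). h \<otimes> g [^] i) ` (H \<times> {0..<int E})"
  proof
    fix w assume "w \<in> join_powers H g"
    then obtain h j where w: "w = h \<otimes> g [^] (j::int)" "h \<in> H" unfolding join_powers_def by blast
    define h' where "h' = h \<otimes> (g [^] E) [^] (j div int E)"
    have "h' \<in> H"
      unfolding h'_def using subgroup.m_closed[OF H(1) w(2) subgroup_int_pow_closed[OF H(1) g(2)]] .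
    moreover have "w = h' \<otimes> g [^] (j mod int E)"
      unfolding w(1) h'_def using int_pow_div_mod[OF g(1), of j "int E"] g(1) subgroup.mem_carrier[OF H(1) w(2)]
      by (simp add: int_pow_int m_assoc)
    ultimately show "w \<in> (\<lambda>(h, i). h \<otimes> g [^] i) ` (H \<times> {0..<int E})"
      using g(3) by (intro image_eqI[of _ _ "(h', j mod int E)"]) auto
  qed
  then show ?thesis using H(2) finite_subset by blast
qed

lemma generate_join_powers_mono:
  assumes "subgroup H G" "g \<in> carrier G"
  shows "generate G (insert g S \<union> H) \<subseteq> generate G (S \<union> join_powers H g)"
proof -
  have "insert g S \<union> H \<subseteq> S \<union> join_powers H g"
    using mem_join_powers[OF assms(1)] generator_mem_join_powers[OF assms] by blast
  then show ?thesis by (rule mono_generate)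
qed

lemma finite_if_generated_over_finite:
  assumes N: "subgroup N G" and comm: "\<And>a b. a \<in> N \<Longrightarrow> b \<in> N \<Longrightarrow> a \<otimes> b = b \<otimes> a"
    and E: "0 < E" and exp: "\<And>a. a \<in> N \<Longrightarrow> a [^] (E::nat) = \<one>"
    and S: "finite S" "S \<subseteq> N"
    and H: "subgroup H G" "H \<subseteq> N" "finite H" and gen: "N \<subseteq> generate G (S \<union> H)"
  shows "finite N"
  using S H gen
proof (induction S arbitrary: H rule: finite_induct)
  case empty
  then have "N \<subseteq> H" using generate_subgroup_incl[of H H] by auto
  then show ?case using empty.prems(4) finite_subset by blast
next
  case (insert g S)
  have g: "g \<in> N" "g \<in> carrier G" using insert.prems(1) subgroup.mem_carrier[OF N] by auto
  note H' = join_powers_in_abelian[OF N comm insert.prems(2,3) g(1)]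
  have "finite (join_powers H g)"
    using join_powers_finite[OF insert.prems(2,4) g(2) _ E] exp[OF g(1)] subgroup.one_closed[OF insert.prems(2)]
    by simp
  moreover have "N \<subseteq> generate G (S \<union> join_powers H g)"
    using insert.prems(5) generate_join_powers_mono[OF insert.prems(2) g(2)] by blast
  ultimately show ?case using insert.IH insert.prems(1) H' by blast
qed

lemma pow_mem_of_pow_mem_join_powers:
  assumes N: "subgroup N G" and comm: "\<And>a b. a \<in> N \<Longrightarrow> b \<in> N \<Longrightarrow> a \<otimes> b = b \<otimes> a"
    and H: "subgroup H G" "H \<subseteq> N" and g: "g \<in> N" "g [^] (f::int) \<in> H"
    and a: "a \<in> N" "a [^] (e::int) \<in> join_powers H g"
  shows "a [^] (e * f) \<in> H"
proof -
  have Nc: "\<And>b. b \<in> N \<Longrightarrow> b \<in> carrier G" using subgroup.mem_carrier[OF N] .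
  obtain h s where h: "h \<in> H" and ae: "a [^] e = h \<otimes> g [^] (s::int)"
    using a(2) unfolding join_powers_def by blast
  have hN: "h \<in> N" "g [^] s \<in> N" using h H(2) subgroup_int_pow_closed[OF N g(1)] by auto
  have "a [^] (e * f) = (h \<otimes> g [^] s) [^] f" using int_pow_pow[OF Nc[OF a(1)], of e f] ae by simp
  also have "\<dots> = h [^] f \<otimes> (g [^] f) [^] s"
    using int_pow_mult_distrib[OF comm[OF hN] Nc[OF hN(1)] Nc[OF hN(2)]] int_pow_pow Nc g(1)
    by (simp add: mult.commute)
  finally show ?thesis
    using subgroup.m_closed[OF H(1) subgroup_int_pow_closed[OF H(1) h] subgroup_int_pow_closed[OF H(1) g(2)]]
    by simp
qed

lemma int_pow_diff_mem_of_decomps: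
  assumes N: "subgroup N G" and comm: "\<And>a b. a \<in> N \<Longrightarrow> b \<in> N \<Longrightarrow> a \<otimes> b = b \<otimes> a"
    and H: "subgroup H G" "H \<subseteq> N" and g: "g \<in> N" and b: "b \<in> N" "g \<otimes> inv (b [^] k) \<in> H"
    and h: "h \<in> H" "b [^] e = h \<otimes> g [^] (t::int)"
  shows "g [^] (e - t * k) \<in> H"
proof -
  have Nc: "\<And>a. a \<in> N \<Longrightarrow> a \<in> carrier G" using subgroup.mem_carrier[OF N] .
  define h0 where "h0 = g \<otimes> inv (b [^] k)"
  have h0: "h0 \<in> H" "h0 \<in> N" using b(2) H(2) unfolding h0_def by auto
  have bk: "b [^] k \<in> N" "g [^] t \<in> N" using subgroup_int_pow_closed[OF N] b(1) g by auto
  have hN: "h \<in> N" using h H(2) by blast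
  have "g [^] e = (h0 \<otimes> b [^] k) [^] e" unfolding h0_def using Nc b(1) g by (simp add: m_assoc)
  also have "\<dots> = h0 [^] e \<otimes> (b [^] e) [^] k"
    using int_pow_mult_distrib[OF comm[OF h0(2) bk(1)] Nc[OF h0(2)] Nc[OF bk(1)]]
      int_pow_pow Nc[OF b(1)] by (simp add: mult.commute)
  also have "(b [^] e) [^] k = h [^] k \<otimes> g [^] (t * k)"
    unfolding h(2) using int_pow_mult_distrib[OF comm[OF hN bk(2)] Nc[OF hN] Nc[OF bk(2)]]
      int_pow_pow Nc[OF g] by simp
  finally have "g [^] (e - t * k) = h0 [^] e \<otimes> h [^] k"
    using int_pow_diff[OF Nc[OF g]] subgroup.mem_carrier[OF H(1)] h0(1) h(1) Nc[OF g] by (simp add: m_assoc)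
  then show ?thesis
    using subgroup.m_closed[OF H(1) subgroup_int_pow_closed[OF H(1)] subgroup_int_pow_closed[OF H(1)]]
      h0(1) h(1) by simp
qed

lemma exists_exponent_into_subgroup:
  assumes N: "subgroup N G" and comm: "\<And>a b. a \<in> N \<Longrightarrow> b \<in> N \<Longrightarrow> a \<otimes> b = b \<otimes> a"
    and k: "1 < k"
    and S: "finite S" "S \<subseteq> N"
    and H: "subgroup H G" "H \<subseteq> N" and div: "\<And>a. a \<in> N \<Longrightarrow> \<exists>b\<in>N. a \<otimes> inv (b [^] k) \<in> H"
    and gen: "N \<subseteq> generate G (S \<union> H)"
  shows "\<exists>e::int. e mod k = 1 \<and> (\<forall>a\<in>N. a [^] e \<in> H)"
  using S H div gen
proof (induction S arbitrary: H rule: finite_induct)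
  case empty
  then have "N \<subseteq> H" using generate_subgroup_incl[of H H] by auto
  then show ?case using k subgroup.mem_carrier[OF N] by (intro exI[of _ 1]) auto
next
  case (insert g S)
  have Nc: "\<And>a. a \<in> N \<Longrightarrow> a \<in> carrier G" using subgroup.mem_carrier[OF N] .
  have g: "g \<in> N" using insert.prems(1) by simp
  note H' = join_powers_in_abelian[OF N comm insert.prems(2,3) g]
  have "N \<subseteq> generate G (S \<union> join_powers H g)"
    using insert.prems(5) generate_join_powers_mono[OF insert.prems(2) Nc[OF g]] by blast
  moreover have "\<exists>b\<in>N. a \<otimes> inv (b [^] k) \<in> join_powers H g" if "a \<in> N" for a
    using insert.prems(4)[OF that] mem_join_powers[OF insert.prems(2)] by blast
  ultimately obtain e where e: "e mod k = 1" "\<forall>a\<in>N. a [^] e \<in> join_powers H g"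
    using insert.IH insert.prems(1) H' by blast
  obtain b where b: "b \<in> N" "g \<otimes> inv (b [^] k) \<in> H" using insert.prems(4)[OF g] by blast
  obtain h1 t where h1: "h1 \<in> H" and bt: "b [^] e = h1 \<otimes> g [^] (t::int)"
    using e(2) b(1) unfolding join_powers_def by blast
  (* g is a k-th power modulo H, so some power g^f with f \<equiv> 1 (mod k) already lies in H. *)
  have g_pow: "g [^] (e - t * k) \<in> H"
    using int_pow_diff_mem_of_decomps[OF N comm insert.prems(2,3) g b h1 bt] .
  have "(e * (e - t * k)) mod k = 1"
    using e(1) k by (simp add: mod_mult_eq[symmetric] mod_diff_eq[symmetric])
  moreover have "a [^] (e * (e - t * k)) \<in> H" if "a \<in> N" for a
    using pow_mem_of_pow_mem_join_powers[OF N comm insert.prems(2,3) g g_pow that] e(2) that by blast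
  ultimately show ?case by blast
qed

primrec ordered_prod :: "(nat \<Rightarrow> 'a) \<Rightarrow> nat \<Rightarrow> 'a" where
  "ordered_prod f 0 = \<one>"
| "ordered_prod f (Suc n) = ordered_prod f n \<otimes> f n"

lemma ordered_prod_mem: "subgroup H G \<Longrightarrow> (\<And>i. i < n \<Longrightarrow> f i \<in> H) \<Longrightarrow> ordered_prod f n \<in> H"
  by (induction n) (auto simp: subgroup.one_closed subgroup.m_closed)

lemma ordered_prod_carrier: "(\<And>i. i < n \<Longrightarrow> f i \<in> carrier G) \<Longrightarrow> ordered_prod f n \<in> carrier G"
  using ordered_prod_mem[OF subgroup_self] .

lemma ordered_prod_cong: "(\<And>i. i < n \<Longrightarrow> f i = g i) \<Longrightarrow> ordered_prod f n = ordered_prod g n"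
  by (induction n) auto

lemma ordered_prod_Suc_shift:
  "(\<And>i. i < Suc n \<Longrightarrow> f i \<in> carrier G) \<Longrightarrow>
   ordered_prod f (Suc n) = f 0 \<otimes> ordered_prod (\<lambda>i. f (Suc i)) n"
proof (induction n)
  case 0
  then show ?case by simp
next
  case (Suc n)
  have "ordered_prod (\<lambda>i. f (Suc i)) n \<in> carrier G" using ordered_prod_carrier Suc.prems by auto
  then show ?case using Suc by (simp add: m_assoc)
qed

lemma ordered_prod_hom:
  assumes "h \<in> hom G G" "\<And>i. i < n \<Longrightarrow> f i \<in> carrier G"
  shows "h (ordered_prod f n) = ordered_prod (\<lambda>i. h (f i)) n"
  using assms(2)
proof (induction n)
  case 0
  then show ?case using hom_one[OF assms(1) is_group is_group] by simp
next
  case (Suc n)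
  then show ?case using ordered_prod_carrier hom_mult[OF assms(1)] by simp
qed

lemma ordered_prod_mult:
  assumes N: "subgroup N G" and comm: "\<And>a b. a \<in> N \<Longrightarrow> b \<in> N \<Longrightarrow> a \<otimes> b = b \<otimes> a"
    and "\<And>i. i < n \<Longrightarrow> f i \<in> N" "\<And>i. i < n \<Longrightarrow> g i \<in> N"
  shows "ordered_prod (\<lambda>i. f i \<otimes> g i) n = ordered_prod f n \<otimes> ordered_prod g n"
  using assms(3,4)
proof (induction n)
  case 0
  then show ?case by simp
next
  case (Suc n)
  have f: "ordered_prod f n \<in> N" "f n \<in> N" and g: "ordered_prod g n \<in> N" "g n \<in> N"
    using Suc.prems ordered_prod_mem[OF N] by auto
  have c: "\<And>a. a \<in> N \<Longrightarrow> a \<in> carrier G" using subgroup.mem_carrier[OF N] .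
  have "ordered_prod g n \<otimes> (f n \<otimes> g n) = f n \<otimes> (ordered_prod g n \<otimes> g n)"
    using comm[OF f(2) g(1)] c f g by (metis m_assoc)
  then show ?case using Suc c f g by (simp add: m_assoc)
qed

lemma ordered_prod_inv:
  assumes N: "subgroup N G" and comm: "\<And>a b. a \<in> N \<Longrightarrow> b \<in> N \<Longrightarrow> a \<otimes> b = b \<otimes> a"
    and "\<And>i. i < n \<Longrightarrow> f i \<in> N"
  shows "inv (ordered_prod f n) = ordered_prod (\<lambda>i. inv (f i)) n"
  using assms(3)
proof (induction n)
  case 0
  then show ?case by simp
next
  case (Suc n)
  have f: "ordered_prod f n \<in> N" "f n \<in> N" using Suc.prems ordered_prod_mem[OF N] by auto
  have "inv (ordered_prod f (Suc n)) = inv (f n) \<otimes> inv (ordered_prod f n)"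
    using f subgroup.mem_carrier[OF N] by (simp add: inv_mult_group)
  also have "\<dots> = inv (ordered_prod f n) \<otimes> inv (f n)"
    using comm subgroup.m_inv_closed[OF N] f by simp
  finally show ?case using Suc by simp
qed

end

subsection \<open>Groups in \<open>\<Y>\<^sub>n\<close>\<close>

locale Yn_grp = group G for G (structure) +
  assumes Yn: "Yn_group G"
begin

lemma mem_if_normalizes_nonabelian:
  assumes H: "subgroup H G" and ab: "a \<in> H" "b \<in> H" "a \<otimes> b \<noteq> b \<otimes> a"
    and g: "g \<in> normalizer G H"
  shows "g \<in> H"
proof -
  have "\<not> comm_group (G\<lparr>carrier := H\<rparr>)" using comm_group_subgroup_iff[OF H] ab by blast
  then have "normalizer G H = H" using Yn H unfolding Yn_group_def by blast
  then show ?thesis using g by simp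
qed

lemma abelian_if_proper_above_derived:
  assumes H: "subgroup H G" and D: "derived G (carrier G) \<subseteq> H" and ne: "H \<noteq> carrier G"
    and ab: "a \<in> H" "b \<in> H"
  shows "a \<otimes> b = b \<otimes> a"
proof (rule ccontr)
  assume "a \<otimes> b \<noteq> b \<otimes> a"
  then have "carrier G \<subseteq> H"
    using mem_if_normalizes_nonabelian[OF H ab]
      normal_mem_normalizer[OF normal_if_derived_subset[OF H D]] by blast
  then show False using ne subgroup.subset[OF H] by blast
qed

lemma join_powers_eq_carrier:
  assumes N: "subgroup N G" and D: "derived G (carrier G) \<subseteq> N" and x: "x \<in> carrier G"
    and a: "a \<in> N" "x \<otimes> a \<noteq> a \<otimes> x"
  shows "join_powers N x = carrier G"
proof -
  have S: "subgroup (join_powers N x) G"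
    using join_powers_subgroup[OF N normal_mem_normalizer[OF normal_if_derived_subset[OF N D] x]] .
  have "derived G (carrier G) \<subseteq> join_powers N x" using D mem_join_powers[OF N] by blast
  moreover have "a \<in> join_powers N x" "x \<in> join_powers N x"
    using mem_join_powers[OF N a(1)] generator_mem_join_powers[OF N x] .
  ultimately show ?thesis using abelian_if_proper_above_derived[OF S] a(2) by metis
qed

end

subsection \<open>An abelian normal subgroup with cyclic quotient\<close>

locale Yn_abelian_by_cyclic = Yn_grp +
  fixes N :: "'a set" and x :: 'a and p :: nat and a0 :: 'a
  assumes N_normal: "N \<lhd> G"
    and N_comm: "\<And>a b. a \<in> N \<Longrightarrow> b \<in> N \<Longrightarrow> a \<otimes> b = b \<otimes> a"
    and x_carrier: "x \<in> carrier G"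
    and p_prime: "normalization_semidom_class.prime p"
    and x_pow_p_mem: "x [^] p \<in> N"
    and a0_mem: "a0 \<in> N" and x_a0_noncomm: "x \<otimes> a0 \<noteq> a0 \<otimes> x"
    and carrier_eq: "carrier G = join_powers N x"

lemma (in Yn_grp) exists_abelian_above_derived_noncentral:
  assumes sol: "solvable G" and nontriv: "carrier G \<noteq> {\<one>}" and nc: "\<not> comm_group G"
  shows "\<exists>N x a. subgroup N G \<and> derived G (carrier G) \<subseteq> N \<and> (\<forall>u\<in>N. \<forall>v\<in>N. u \<otimes> v = v \<otimes> u)
    \<and> x \<in> carrier G \<and> a \<in> N \<and> x \<otimes> a \<noteq> a \<otimes> x"
proof -
  let ?D = "derived G (carrier G)"
  have D: "subgroup ?D G" by (simp add: derived_is_subgroup)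
  have D_comm: "\<And>u v. u \<in> ?D \<Longrightarrow> v \<in> ?D \<Longrightarrow> u \<otimes> v = v \<otimes> u"
    using abelian_if_proper_above_derived[OF D subset_refl derived_ne_carrier[OF sol nontriv]] .
  obtain s t where s: "s \<in> carrier G" and t: "t \<in> carrier G" and st: "s \<otimes> t \<noteq> t \<otimes> s"
    using nc group_comm_groupI by blast
  show ?thesis
  proof (cases "join_powers ?D t = carrier G")
    case False
    have "subgroup (join_powers ?D t) G"
      using join_powers_subgroup[OF D normal_mem_normalizer[OF normal_if_derived_subset[OF D subset_refl] t]] .
    moreover have "?D \<subseteq> join_powers ?D t" "t \<in> join_powers ?D t"
      using mem_join_powers[OF D] generator_mem_join_powers[OF D t] by auto
    ultimately show ?thesis
      using abelian_if_proper_above_derived[OF _ _ False] s st by blast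
  next
    case True
    then have "\<exists>d\<in>?D. t \<otimes> d \<noteq> d \<otimes> t"
      using join_powers_commute[OF D D_comm t, of s t] s t st by auto
    then show ?thesis using D t D_comm by blast
  qed
qed

lemma (in Yn_grp) exists_abelian_by_cyclic:
  assumes sol: "solvable G" and nontriv: "carrier G \<noteq> {\<one>}" and nc: "\<not> comm_group G"
  shows "\<exists>N x p a. Yn_abelian_by_cyclic G N x p a"
proof -
  obtain N0 x a where N0: "subgroup N0 G" "derived G (carrier G) \<subseteq> N0"
    and N0_comm: "\<forall>u\<in>N0. \<forall>v\<in>N0. u \<otimes> v = v \<otimes> u"
    and x: "x \<in> carrier G" and a: "a \<in> N0" "x \<otimes> a \<noteq> a \<otimes> x"
    using exists_abelian_above_derived_noncentral[OF assms] by blast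
  have "x \<notin> N0" using N0_comm a by blast
  then obtain p :: nat where p: "normalization_semidom_class.prime p" and xp: "x \<notin> join_powers N0 (x [^] p)"
    using exists_prime_not_mem_join_powers[OF N0(1) x] by blast
  define N where "N = join_powers N0 (x [^] p)"
  have N: "subgroup N G" unfolding N_def
    using join_powers_subgroup[OF N0(1) normal_mem_normalizer[OF normal_if_derived_subset[OF N0]]] x by simp
  have DN: "derived G (carrier G) \<subseteq> N" "a \<in> N" "x [^] p \<in> N"
    using N0 a mem_join_powers[OF N0(1)] generator_mem_join_powers[OF N0(1)] x unfolding N_def by auto
  have "N \<noteq> carrier G" using xp x unfolding N_def by blast
  then have "Yn_abelian_by_cyclic G N x p a"
    using N DN x p a(2) abelian_if_proper_above_derived[OF N DN(1)]
      normal_if_derived_subset[OF N DN(1)] join_powers_eq_carrier[OF N DN(1) x DN(2) a(2)]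
    by (intro Yn_abelian_by_cyclic.intro Yn_abelian_by_cyclic_axioms.intro Yn_grp_axioms) auto
  then show ?thesis by blast
qed

context Yn_abelian_by_cyclic begin

lemma N_subgroup: "subgroup N G"
  using N_normal normal_imp_subgroup by blast

lemma N_carrier: "a \<in> N \<Longrightarrow> a \<in> carrier G"
  using subgroup.mem_carrier[OF N_subgroup] .

lemma N_mult: "a \<in> N \<Longrightarrow> b \<in> N \<Longrightarrow> a \<otimes> b \<in> N"
  using subgroup.m_closed[OF N_subgroup] .

lemma N_inv: "a \<in> N \<Longrightarrow> inv a \<in> N"
  using subgroup.m_inv_closed[OF N_subgroup] .

lemma N_int_pow: "a \<in> N \<Longrightarrow> a [^] (k::int) \<in> N"
  using subgroup_int_pow_closed[OF N_subgroup] .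

lemma N_one: "\<one> \<in> N"
  using subgroup.one_closed[OF N_subgroup] .

lemma N_conj: "g \<in> carrier G \<Longrightarrow> a \<in> N \<Longrightarrow> g \<otimes> a \<otimes> inv g \<in> N"
  using normal.inv_op_closed2[OF N_normal] .

lemma N_left_comm: "a \<in> N \<Longrightarrow> b \<in> N \<Longrightarrow> c \<in> carrier G \<Longrightarrow> a \<otimes> (b \<otimes> c) = b \<otimes> (a \<otimes> c)"
  by (metis N_carrier N_comm m_assoc)

lemma carrier_decomp: "g \<in> carrier G \<Longrightarrow> \<exists>n\<in>N. \<exists>j::int. g = n \<otimes> x [^] j"
  using carrier_eq unfolding join_powers_def by blast

lemma p_gt_1: "1 < p"
  using prime_gt_1_nat[OF p_prime] .

definition z where "z = x [^] p"

lemma z_eq_int_pow: "z = x [^] (int p)"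
  unfolding z_def by (simp add: int_pow_int)

lemma z_mem: "z \<in> N"
  unfolding z_def using x_pow_p_mem .

lemma z_carrier: "z \<in> carrier G"
  using N_carrier[OF z_mem] .

lemma z_central:
  assumes g: "g \<in> carrier G"
  shows "z \<otimes> g = g \<otimes> z"
proof -
  obtain n j where n: "n \<in> N" and gj: "g = n \<otimes> x [^] (j::int)" using carrier_decomp[OF g] by blast
  have "z \<otimes> x [^] j = x [^] j \<otimes> z"
    unfolding z_eq_int_pow using x_carrier by (simp add: int_pow_mult[symmetric] add.commute)
  moreover have "z \<otimes> g = n \<otimes> (z \<otimes> x [^] j)"
    unfolding gj using N_left_comm[OF z_mem n] x_carrier by (simp add: m_assoc[symmetric])
  ultimately show ?thesis unfolding gj using n N_carrier x_carrier z_carrier by (simp add: m_assoc)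
qed

lemma z_int_pow_central: "g \<in> carrier G \<Longrightarrow> z [^] (i::int) \<otimes> g = g \<otimes> z [^] i"
  using int_pow_commute[OF z_carrier _ z_central] by blast

lemma x_int_pow_mult_p: "x [^] (int p * t) = z [^] t"
  unfolding z_eq_int_pow using int_pow_pow[OF x_carrier] by simp

lemma x_int_pow_mem_imp_dvd:
  assumes j: "x [^] (j::int) \<in> N"
  shows "int p dvd j"
proof (rule ccontr)
  assume "\<not> int p dvd j"
  moreover have "normalization_semidom_class.prime (int p)"
    using p_prime by (simp add: prime_nat_int_transfer)
  ultimately have "coprime (int p) j" using prime_imp_coprime by blast
  then obtain u v where uv: "u * int p + v * j = 1" using bezout_int[of "int p" j] by auto
  have "x = x [^] (int p * u + j * v)" using uv x_carrier by (simp add: algebra_simps)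
  also have "\<dots> = (x [^] int p) [^] u \<otimes> (x [^] j) [^] v"
    using x_carrier by (simp add: int_pow_mult int_pow_pow)
  finally have "x = (x [^] int p) [^] u \<otimes> (x [^] j) [^] v" .
  then have "x \<in> N"
    using N_int_pow[OF z_mem, unfolded z_eq_int_pow] N_int_pow[OF j] N_mult by metis
  then show False using x_a0_noncomm N_comm a0_mem by blast
qed

definition phi where "phi a = x \<otimes> a \<otimes> inv x"

definition delta where "delta a = a \<otimes> inv (phi a)"

lemma phi_hom: "phi \<in> hom G G"
  unfolding phi_def[abs_def] using conj_hom[OF x_carrier] .

lemma phi_carrier: "a \<in> carrier G \<Longrightarrow> phi a \<in> carrier G"
  unfolding phi_def using x_carrier by simp

lemma phi_mem: "a \<in> N \<Longrightarrow> phi a \<in> N"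
  unfolding phi_def using N_conj x_carrier by simp

lemma phi_mult: "a \<in> carrier G \<Longrightarrow> b \<in> carrier G \<Longrightarrow> phi (a \<otimes> b) = phi a \<otimes> phi b"
  using hom_mult[OF phi_hom] .

lemma phi_int_pow: "a \<in> carrier G \<Longrightarrow> phi (a [^] (k::int)) = phi a [^] k"
  unfolding phi_def using conj_int_pow[OF x_carrier] by simp

lemma phi_z_pow: "phi (z [^] (i::int)) = z [^] i"
proof -
  have "phi (z [^] i) = z [^] i \<otimes> x \<otimes> inv x"
    unfolding phi_def using z_int_pow_central[OF x_carrier] by simp
  then show ?thesis using x_carrier z_carrier by (simp add: m_assoc)
qed

lemma phi_funpow: "a \<in> carrier G \<Longrightarrow> (phi ^^ i) a = x [^] i \<otimes> a \<otimes> inv (x [^] i)"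
proof (induction i)
  case 0
  then show ?case by simp
next
  case (Suc i)
  have "x [^] Suc i = x \<otimes> x [^] i" using nat_pow_Suc2[OF x_carrier] .
  then show ?case using Suc x_carrier by (simp add: phi_def m_assoc inv_mult_group)
qed

lemma phi_funpow_p: "a \<in> carrier G \<Longrightarrow> (phi ^^ p) a = a"
proof -
  assume a: "a \<in> carrier G"
  have "(phi ^^ p) a = z \<otimes> a \<otimes> inv z" unfolding phi_funpow[OF a] z_def ..
  also have "\<dots> = a" using z_central[OF a] a z_carrier by (simp add: m_assoc)
  finally show ?thesis .
qed

lemma phi_funpow_mem: "a \<in> N \<Longrightarrow> (phi ^^ i) a \<in> N"
  by (induction i) (auto simp: phi_mem)

lemma phi_funpow_carrier: "a \<in> carrier G \<Longrightarrow> (phi ^^ i) a \<in> carrier G"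
  by (induction i) (auto simp: phi_carrier)

lemma delta_mem: "a \<in> N \<Longrightarrow> delta a \<in> N"
  unfolding delta_def using phi_mem N_inv N_mult by simp

lemma delta_mult:
  assumes a: "a \<in> N" and b: "b \<in> N"
  shows "delta (a \<otimes> b) = delta a \<otimes> delta b"
proof -
  have "delta (a \<otimes> b) = a \<otimes> b \<otimes> (inv (phi b) \<otimes> inv (phi a))"
    unfolding delta_def using phi_mult N_carrier a b phi_carrier by (simp add: inv_mult_group)
  also have "\<dots> = a \<otimes> (inv (phi a) \<otimes> (b \<otimes> inv (phi b)))"
    using a b N_carrier phi_mem N_inv N_left_comm N_comm by (simp add: m_assoc)
  also have "\<dots> = delta a \<otimes> delta b"
    unfolding delta_def using a b N_carrier phi_carrier by (simp add: m_assoc)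
  finally show ?thesis .
qed

lemma delta_eq_one_iff:
  assumes a: "a \<in> N"
  shows "delta a = \<one> \<longleftrightarrow> x \<otimes> a = a \<otimes> x"
proof -
  have ac: "a \<in> carrier G" using N_carrier a .
  have "delta a = \<one> \<longleftrightarrow> a = phi a" unfolding delta_def using ac phi_carrier
    by (metis inv_closed inv_equality inv_inv r_inv)
  also have "\<dots> \<longleftrightarrow> a \<otimes> x = x \<otimes> a" unfolding phi_def using ac x_carrier
    by (metis inv_solve_right m_closed)
  finally show ?thesis by auto
qed

lemma delta_inv:
  assumes a: "a \<in> N"
  shows "delta (inv a) = inv (delta a)"
proof -
  have "delta (inv a) \<otimes> delta a = delta (inv a \<otimes> a)" using delta_mult N_inv a by simp
  also have "\<dots> = \<one>" using delta_eq_one_iff[OF N_one] N_carrier[OF a] x_carrier by simp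
  finally show ?thesis using delta_mem N_carrier a N_inv by (simp add: inv_equality)
qed

lemma delta_nat_pow: "a \<in> N \<Longrightarrow> delta (a [^] (k::nat)) = delta a [^] k"
proof (induction k)
  case 0
  then show ?case using delta_eq_one_iff[OF N_one] x_carrier by simp
next
  case (Suc k)
  then have "a [^] k \<in> N" using N_int_pow[of a "int k"] by (simp add: int_pow_int)
  then show ?case using delta_mult[OF _ Suc.prems] Suc by simp
qed

lemma delta_int_pow:
  assumes a: "a \<in> N"
  shows "delta (a [^] (k::int)) = delta a [^] k"
proof (cases "k < 0")
  case True
  have "a [^] nat (-k) = a [^] (-k)" by (rule pow_nat) (use True in simp)
  then have "a [^] nat (-k) \<in> N" using N_int_pow[OF a, of "-k"] by simp
  moreover have "a [^] k = inv (a [^] nat (-k))" "delta a [^] k = inv (delta a [^] nat (-k))"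
    by (subst int_pow_def2, simp add: True)+
  ultimately show ?thesis using delta_inv delta_nat_pow[OF a] by simp
next
  case False
  have "a [^] k = a [^] nat k" "delta a [^] k = delta a [^] nat k"
    by (subst int_pow_def2, simp add: False)+
  then show ?thesis using delta_nat_pow[OF a] by simp
qed

lemma conj_x_eq_delta:
  assumes a: "a \<in> N"
  shows "a \<otimes> x \<otimes> inv a = delta a \<otimes> x"
  unfolding delta_def phi_def using N_carrier[OF a] x_carrier by (simp add: m_assoc inv_mult_group)

(* In additive notation delta = 1 - phi, so delta^j = \<Sum>i\<le>j. (-1)^i (j choose i) phi^i. *)
definition binom_term :: "'a \<Rightarrow> nat \<Rightarrow> nat \<Rightarrow> 'a" where
  "binom_term a j i = ((phi ^^ i) a) [^] ((-1::int) ^ i * int (j choose i))"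

lemma binom_term_mem: "a \<in> N \<Longrightarrow> binom_term a j i \<in> N"
  unfolding binom_term_def using phi_funpow_mem N_int_pow by simp

lemma binom_term_0: "a \<in> N \<Longrightarrow> binom_term a j 0 = a"
  unfolding binom_term_def using N_carrier by simp

lemma binom_term_eq_one: "binom_term a j (Suc j) = \<one>"
  unfolding binom_term_def by (simp add: binomial_eq_0)

lemma binom_term_Suc:
  assumes a: "a \<in> N"
  shows "binom_term a (Suc j) (Suc i) = inv (phi (binom_term a j i)) \<otimes> binom_term a j (Suc i)"
proof -
  define b where "b = (phi ^^ Suc i) a"
  define e1 where "e1 = (-1::int) ^ Suc i * int (j choose i)"
  define e2 where "e2 = (-1::int) ^ Suc i * int (j choose Suc i)"
  have c: "(phi ^^ i) a \<in> carrier G" using phi_funpow_mem a N_carrier by blast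
  have "inv (phi (binom_term a j i)) = b [^] e1"
    unfolding binom_term_def b_def e1_def using phi_int_pow[OF c] int_pow_neg phi_carrier[OF c] by simp
  moreover have "binom_term a j (Suc i) = b [^] e2"
    unfolding binom_term_def b_def e2_def ..
  moreover have "(-1::int) ^ Suc i * int (Suc j choose Suc i) = e1 + e2"
    unfolding e1_def e2_def by (simp add: algebra_simps)
  then have "binom_term a (Suc j) (Suc i) = b [^] (e1 + e2)"
    by (simp only: binom_term_def b_def)
  ultimately show ?thesis
    using int_pow_mult phi_carrier[OF c] unfolding b_def by simp
qed

lemma delta_funpow_eq_prod:
  assumes a: "a \<in> N"
  shows "(delta ^^ j) a = ordered_prod (binom_term a j) (Suc j)"
proof (induction j)
  case 0
  then show ?case using binom_term_0[OF a] N_carrier[OF a] by simp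
next
  case (Suc j)
  define P where "P = ordered_prod (binom_term a j) (Suc j)"
  define Q where "Q i = inv (phi (binom_term a j i))" for i
  define R where "R = ordered_prod (\<lambda>i. binom_term a j (Suc i)) j"
  have bt: "\<And>j i. binom_term a j i \<in> N" using binom_term_mem[OF a] .
  have btc: "\<And>j i. binom_term a j i \<in> carrier G" using N_carrier[OF bt] .
  have Q: "\<And>i. Q i \<in> N" unfolding Q_def by (intro N_inv phi_mem bt)
  have R: "R \<in> N" unfolding R_def by (intro ordered_prod_mem[OF N_subgroup] bt)
  have QR: "ordered_prod Q (Suc j) \<in> N" by (intro ordered_prod_mem[OF N_subgroup] Q)
  have "phi P = ordered_prod (\<lambda>i. phi (binom_term a j i)) (Suc j)"
    unfolding P_def by (rule ordered_prod_hom[OF phi_hom btc])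
  then have inv_phi_P: "inv (phi P) = ordered_prod Q (Suc j)"
    unfolding Q_def by (simp only:) (rule ordered_prod_inv[OF N_subgroup N_comm phi_mem[OF bt]])
  have "P = binom_term a j 0 \<otimes> R"
    unfolding P_def R_def by (rule ordered_prod_Suc_shift[OF btc])
  then have P: "P = a \<otimes> R" using binom_term_0[OF a] by simp
  have "ordered_prod (binom_term a (Suc j)) (Suc (Suc j))
      = binom_term a (Suc j) 0 \<otimes> ordered_prod (\<lambda>i. binom_term a (Suc j) (Suc i)) (Suc j)"
    by (rule ordered_prod_Suc_shift[OF btc])
  also have "ordered_prod (\<lambda>i. binom_term a (Suc j) (Suc i)) (Suc j)
      = ordered_prod (\<lambda>i. Q i \<otimes> binom_term a j (Suc i)) (Suc j)"
    by (rule ordered_prod_cong) (simp add: binom_term_Suc[OF a] Q_def)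
  also have "\<dots> = ordered_prod Q (Suc j) \<otimes> ordered_prod (\<lambda>i. binom_term a j (Suc i)) (Suc j)"
    by (rule ordered_prod_mult[OF N_subgroup N_comm Q bt])
  also have "ordered_prod (\<lambda>i. binom_term a j (Suc i)) (Suc j) = R"
    unfolding R_def using binom_term_eq_one ordered_prod_carrier btc by simp
  finally have "ordered_prod (binom_term a (Suc j)) (Suc (Suc j)) = a \<otimes> (ordered_prod Q (Suc j) \<otimes> R)"
    using binom_term_0[OF a] by simp
  also have "\<dots> = a \<otimes> R \<otimes> ordered_prod Q (Suc j)"
    using N_comm[OF R QR] a R QR N_carrier by (metis m_assoc)
  also have "\<dots> = P \<otimes> inv (phi P)"
    using P inv_phi_P by simp
  also have "\<dots> = delta P"
    unfolding delta_def ..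
  also have "\<dots> = (delta ^^ Suc j) a"
    using Suc unfolding P_def by simp
  finally show ?case by simp
qed

definition kth_powers :: "int \<Rightarrow> 'a set" where
  "kth_powers k = {b [^] k | b. b \<in> N}"

lemma kth_powers_mem: "b \<in> N \<Longrightarrow> b [^] k \<in> kth_powers k"
  unfolding kth_powers_def by blast

lemma kth_powers_subset: "kth_powers k \<subseteq> N"
  unfolding kth_powers_def using N_int_pow by blast

lemma kth_powers_subgroup: "subgroup (kth_powers k) G"
proof (rule subgroupI)
  show "kth_powers k \<subseteq> carrier G" using kth_powers_subset N_carrier by blast
  show "kth_powers k \<noteq> {}" using kth_powers_mem[OF N_one] by blast
next
  fix a assume "a \<in> kth_powers k"
  then obtain b where b: "b \<in> N" "a = b [^] k" unfolding kth_powers_def by blast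
  then have "inv a = (inv b) [^] k" using N_carrier by (simp add: int_pow_inv)
  then show "inv a \<in> kth_powers k" using kth_powers_mem[OF N_inv[OF b(1)]] by simp
next
  fix a c assume "a \<in> kth_powers k" "c \<in> kth_powers k"
  then obtain b d where b: "b \<in> N" "a = b [^] k" and d: "d \<in> N" "c = d [^] k"
    unfolding kth_powers_def by blast
  have "a \<otimes> c = (b \<otimes> d) [^] k"
    using int_pow_mult_distrib[OF N_comm] b d N_carrier by simp
  then show "a \<otimes> c \<in> kth_powers k" using kth_powers_mem[OF N_mult[OF b(1) d(1)]] by simp
qed

lemma kth_powers_normal: "kth_powers k \<lhd> G"
proof -
  have "g \<otimes> a \<otimes> inv g \<in> kth_powers k" if g: "g \<in> carrier G" and a: "a \<in> kth_powers k" for g a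
  proof -
    obtain b where b: "b \<in> N" "a = b [^] k" using a unfolding kth_powers_def by blast
    then have "g \<otimes> a \<otimes> inv g = (g \<otimes> b \<otimes> inv g) [^] k" using conj_int_pow g N_carrier by simp
    then show ?thesis using kth_powers_mem[OF N_conj[OF g b(1)]] by simp
  qed
  then show ?thesis using kth_powers_subgroup normal_inv_iff by blast
qed

lemma binom_term_p_mem:
  assumes a: "a \<in> N" and i: "0 < i" "i < p"
  shows "binom_term a p i \<in> kth_powers (int p)"
proof -
  have "p dvd (p choose i)" by (rule dvd_choose_prime) (use i p_prime in auto)
  then obtain c where c: "p choose i = p * c" by blast
  have b: "(phi ^^ i) a \<in> N" using phi_funpow_mem a by blast
  have "binom_term a p i = ((phi ^^ i) a) [^] (((-1::int) ^ i * int c) * int p)"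
    unfolding binom_term_def c by (simp add: algebra_simps)
  also have "\<dots> = (((phi ^^ i) a) [^] ((-1::int) ^ i * int c)) [^] int p"
    using int_pow_pow N_carrier b by simp
  finally show ?thesis using kth_powers_mem N_int_pow b by simp
qed

lemma pow_one_plus_sign_mem:
  assumes a: "a \<in> N"
  shows "a [^] (1 + (-1::int) ^ p) \<in> kth_powers (int p)"
proof (cases "even p")
  case True
  then have "p = 2" using p_prime primes_dvd_imp_eq two_is_prime_nat by blast
  then show ?thesis using kth_powers_mem[OF a, of 2] by simp
next
  case False
  then show ?thesis using kth_powers_mem[OF N_one, of "int p"] by simp
qed

(* As phi^p = id and p divides the inner binomial coefficients,
   delta^p a \<equiv> a^(1 + (-1)^p) modulo p-th powers. *)
lemma delta_funpow_p_mem: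
  assumes a: "a \<in> N"
  shows "(delta ^^ p) a \<in> kth_powers (int p)"
proof -
  obtain q where pq: "p = Suc q" using p_gt_1 by (cases p) auto
  define R where "R = ordered_prod (\<lambda>i. binom_term a p (Suc i)) q"
  have R: "R \<in> kth_powers (int p)"
    unfolding R_def using binom_term_p_mem[OF a] pq
    by (intro ordered_prod_mem[OF kth_powers_subgroup]) simp
  have RN: "R \<in> N" using R kth_powers_subset by blast
  have btc: "\<And>i. binom_term a p i \<in> carrier G" using N_carrier[OF binom_term_mem[OF a]] .
  have "ordered_prod (binom_term a p) (Suc q) = binom_term a p 0 \<otimes> R"
    unfolding R_def by (rule ordered_prod_Suc_shift) (rule btc)
  then have shift: "ordered_prod (binom_term a p) p = a \<otimes> R" using pq binom_term_0[OF a] by simp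
  have "(delta ^^ p) a = ordered_prod (binom_term a p) p \<otimes> binom_term a p p"
    using delta_funpow_eq_prod[OF a, of p] by simp
  also note shift
  also have "binom_term a p p = a [^] ((-1::int) ^ p)"
    unfolding binom_term_def using phi_funpow_p N_carrier[OF a] by simp
  also have "a \<otimes> R \<otimes> a [^] ((-1::int) ^ p) = R \<otimes> a [^] (1 + (-1::int) ^ p)"
    using N_comm[OF a RN] N_carrier[OF a] N_carrier[OF RN] by (simp add: m_assoc int_pow_mult)
  finally show ?thesis
    using subgroup.m_closed[OF kth_powers_subgroup R pow_one_plus_sign_mem[OF a]] by simp
qed

lemma mem_join_powers_if_delta_mem:
  assumes M: "subgroup M G" "M \<subseteq> N" and x: "x \<in> normalizer G M"
    and c: "c \<in> M" "x \<otimes> c \<noteq> c \<otimes> x"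
    and a: "a \<in> N" and d: "delta a \<in> join_powers M x"
  shows "a \<in> join_powers M x"
proof -
  have S: "subgroup (join_powers M x) G" using join_powers_subgroup[OF M(1) x] .
  (* Conjugation by b \<in> N fixes M pointwise and sends x to delta b \<otimes> x. *)
  have conj: "b \<otimes> h \<otimes> inv b \<in> join_powers M x"
    if b: "b \<in> N" "delta b \<in> join_powers M x" and h: "h \<in> join_powers M x" for b h
  proof -
    obtain m j where m: "m \<in> M" and hj: "h = m \<otimes> x [^] (j::int)" using h unfolding join_powers_def by blast
    have mc: "m \<in> carrier G" "b \<in> carrier G" using m M(2) b(1) N_carrier by auto
    have "b \<otimes> h \<otimes> inv b = m \<otimes> (b \<otimes> x [^] j \<otimes> inv b)"
      unfolding hj using N_comm[OF b(1)] m M(2) mc x_carrier by (auto simp: m_assoc[symmetric])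
    also have "\<dots> = m \<otimes> (delta b \<otimes> x) [^] j"
      using conj_int_pow[OF mc(2) x_carrier] conj_x_eq_delta[OF b(1)] by simp
    finally show ?thesis
      using subgroup.m_closed[OF S mem_join_powers[OF M(1) m] subgroup_int_pow_closed[OF S
          subgroup.m_closed[OF S b(2) generator_mem_join_powers[OF M(1) x_carrier]]]] by simp
  qed
  have "a \<in> normalizer G (join_powers M x)"
  proof (rule mem_normalizerI[OF subgroup.subset[OF S] N_carrier[OF a]])
    fix h assume "h \<in> join_powers M x"
    then show "a \<otimes> h \<otimes> inv a \<in> join_powers M x" using conj[OF a d] by blast
    have "delta (inv a) \<in> join_powers M x" using delta_inv[OF a] subgroup.m_inv_closed[OF S d] by simp
    then show "inv a \<otimes> h \<otimes> a \<in> join_powers M x"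
      using conj[OF N_inv[OF a]] \<open>h \<in> join_powers M x\<close> N_carrier[OF a] by force
  qed
  moreover have "c \<otimes> x \<noteq> x \<otimes> c" using c(2) by metis
  ultimately show ?thesis
    using mem_if_normalizes_nonabelian[OF S mem_join_powers[OF M(1) c(1)]
        generator_mem_join_powers[OF M(1) x_carrier]] by blast
qed

lemma mem_join_powers_if_delta_funpow_mem:
  assumes M: "subgroup M G" "M \<subseteq> N" and x: "x \<in> normalizer G M"
    and c: "c \<in> M" "x \<otimes> c \<noteq> c \<otimes> x"
  shows "a \<in> N \<Longrightarrow> (delta ^^ n) a \<in> join_powers M x \<Longrightarrow> a \<in> join_powers M x"
proof (induction n arbitrary: a)
  case 0
  then show ?case by simp
next
  case (Suc n)
  then have "delta a \<in> join_powers M x" using delta_mem by (simp add: funpow_Suc_right del: funpow.simps)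
  then show ?case using mem_join_powers_if_delta_mem[OF M x c Suc.prems(1)] by blast
qed

lemma mem_join_powers_x_decomp:
  assumes M: "M \<subseteq> N" and a: "a \<in> N" "a \<in> join_powers M x"
  shows "\<exists>m\<in>M. \<exists>t::int. a = m \<otimes> z [^] t"
proof -
  obtain m j where aj: "a = m \<otimes> x [^] (j::int)" and m: "m \<in> M"
    using a(2) unfolding join_powers_def by blast
  have mN: "m \<in> N" using M m by blast
  have "x [^] j = inv m \<otimes> a" unfolding aj using N_carrier[OF mN] x_carrier by simp
  then have "x [^] j \<in> N" using N_inv[OF mN] a(1) N_mult by simp
  then obtain t where "j = int p * t" using x_int_pow_mem_imp_dvd by blast
  then have "a = m \<otimes> z [^] t" using aj x_int_pow_mult_p by simp
  then show ?thesis using m by blast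
qed

lemma exists_kth_power_decomposition:
  "\<exists>k::int. 2 \<le> k \<and> (\<forall>a\<in>N. \<exists>b\<in>N. \<exists>t::int. a = b [^] k \<otimes> z [^] t)"
proof -
  obtain k c where k: "2 \<le> k" and c: "c \<in> kth_powers k" "x \<otimes> c \<noteq> c \<otimes> x"
    and reach: "\<And>a. a \<in> N \<Longrightarrow> \<exists>n. (delta ^^ n) a \<in> kth_powers k"
  proof (cases "\<exists>b\<in>N. delta b [^] int p \<noteq> \<one>")
    case True
    then obtain b where b: "b \<in> N" "delta b [^] int p \<noteq> \<one>" by blast
    have "x \<otimes> b [^] int p \<noteq> b [^] int p \<otimes> x"
      using delta_eq_one_iff[OF N_int_pow[OF b(1)]] delta_int_pow[OF b(1)] b(2) by simp
    then show thesis
      using that[of "int p" "b [^] int p"] p_gt_1 kth_powers_mem[OF b(1)] delta_funpow_p_mem by force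
  next
    case False
    have delta_eq: "delta b [^] (int p + 1) = delta b" if "b \<in> N" for b
      using False that N_carrier[OF delta_mem[OF that]] by (simp add: int_pow_mult)
    have "delta (a0 [^] (int p + 1)) = delta a0"
      using delta_int_pow[OF a0_mem] delta_eq[OF a0_mem] by simp
    then have "x \<otimes> a0 [^] (int p + 1) \<noteq> a0 [^] (int p + 1) \<otimes> x"
      using delta_eq_one_iff[OF N_int_pow[OF a0_mem]] delta_eq_one_iff[OF a0_mem] x_a0_noncomm by metis
    moreover have "(delta ^^ 1) a \<in> kth_powers (int p + 1)" if "a \<in> N" for a
      using kth_powers_mem[OF delta_mem[OF that], of "int p + 1"] delta_eq[OF that] by simp
    moreover have "2 \<le> int p + 1" using p_gt_1 by simp
    ultimately show thesis
      using that[OF _ kth_powers_mem[OF a0_mem]] by blast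
  qed
  have x: "x \<in> normalizer G (kth_powers k)"
    using normal_mem_normalizer[OF kth_powers_normal x_carrier] .
  have "\<exists>b\<in>N. \<exists>t::int. a = b [^] k \<otimes> z [^] t" if a: "a \<in> N" for a
  proof -
    obtain n where "(delta ^^ n) a \<in> kth_powers k" using reach[OF a] by blast
    then have "a \<in> join_powers (kth_powers k) x"
      using mem_join_powers_if_delta_funpow_mem[OF kth_powers_subgroup kth_powers_subset x c a]
        mem_join_powers[OF kth_powers_subgroup] by blast
    then obtain m t where "m \<in> kth_powers k" "a = m \<otimes> z [^] (t::int)"
      using mem_join_powers_x_decomp[OF kth_powers_subset a] by blast
    then show ?thesis unfolding kth_powers_def by blast
  qed
  then show ?thesis using k by blast
qed

lemma z_powers_subgroup: "subgroup (generate G {z}) G"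
  using generate_is_subgroup z_carrier by simp

lemma z_powers_subset: "generate G {z} \<subseteq> N"
  using generate_subgroup_incl[OF _ N_subgroup] z_mem by simp

lemma mem_z_powers_iff: "w \<in> generate G {z} \<longleftrightarrow> (\<exists>i::int. w = z [^] i)"
  using generate_pow[OF z_carrier] by blast

lemma conj_inv_x_eq_phi_funpow:
  assumes a: "a \<in> carrier G"
  shows "inv x \<otimes> a \<otimes> x = (phi ^^ (p - 1)) a"
proof -
  define b where "b = (phi ^^ (p - 1)) a"
  have b: "b \<in> carrier G" unfolding b_def using phi_funpow_carrier[OF a] .
  have "Suc (p - 1) = p" using p_gt_1 by simp
  then have "phi b = a"
    unfolding b_def using phi_funpow_p[OF a] by (metis funpow.simps(2) o_apply)
  then have "a = x \<otimes> b \<otimes> inv x" unfolding phi_def ..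
  then have "inv x \<otimes> a \<otimes> x = b" using x_carrier b by (simp add: m_assoc)
  then show ?thesis unfolding b_def .
qed

lemma phi_mem_orbits:
  assumes B: "B \<subseteq> carrier G" and a: "a \<in> (\<lambda>(b, i). (phi ^^ i) b) ` (B \<times> {..<p})"
  shows "phi a \<in> (\<lambda>(b, i). (phi ^^ i) b) ` (B \<times> {..<p})"
proof -
  obtain b i where bi: "b \<in> B" "i < p" "a = (phi ^^ i) b" using a by auto
  have phi_a: "phi a = (phi ^^ Suc i) b" using bi(3) by simp
  show ?thesis
  proof (cases "Suc i = p")
    case True
    then have "phi a = (phi ^^ 0) b" using phi_a phi_funpow_p B bi(1) by auto
    then show ?thesis using bi(1) p_gt_1 by (intro image_eqI[of _ _ "(b, 0)"]) auto
  next
    case False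
    then show ?thesis using bi phi_a by (intro image_eqI[of _ _ "(b, Suc i)"]) auto
  qed
qed

lemma x_mem_normalizer_if_phi_closed:
  assumes L: "subgroup L G" and phi_L: "\<And>l. l \<in> L \<Longrightarrow> phi l \<in> L"
  shows "x \<in> normalizer G L"
proof (rule mem_normalizerI[OF subgroup.subset[OF L] x_carrier])
  fix l assume l: "l \<in> L"
  show "x \<otimes> l \<otimes> inv x \<in> L" using phi_L[OF l] unfolding phi_def .
  have "(phi ^^ k) l \<in> L" for k by (induction k) (auto simp: phi_L l)
  then show "inv x \<otimes> l \<otimes> x \<in> L"
    using conj_inv_x_eq_phi_funpow[OF subgroup.mem_carrier[OF L l]] by simp
qed

lemma N_subset_if_carrier_subset_join_powers:
  assumes L: "subgroup L G" "L \<subseteq> N" "generate G {z} \<subseteq> L" and G_L: "carrier G \<subseteq> join_powers L x"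
  shows "N \<subseteq> L"
proof
  fix a assume a: "a \<in> N"
  obtain l t where l: "l \<in> L" and at: "a = l \<otimes> z [^] (t::int)"
    using mem_join_powers_x_decomp[OF L(2) a] G_L N_carrier[OF a] by blast
  have "z [^] t \<in> L" using L(3) mem_z_powers_iff by blast
  then show "a \<in> L" unfolding at using subgroup.m_closed[OF L(1) l] by simp
qed

lemma N_generated_over_z_powers:
  assumes fg: "finitely_generated_group G"
  shows "\<exists>S. finite S \<and> S \<subseteq> N \<and> N \<subseteq> generate G (S \<union> generate G {z})"
proof -
  obtain T where T: "finite T" "T \<subseteq> carrier G" "generate G T = carrier G"
    using fg unfolding finitely_generated_group_def by blast
  have "\<forall>t\<in>T. \<exists>n j. n \<in> N \<and> t = n \<otimes> x [^] (j::int)" using carrier_decomp T(2) by blast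
  then obtain n j where nj: "\<And>t. t \<in> T \<Longrightarrow> n t \<in> N \<and> t = n t \<otimes> x [^] (j t :: int)"
    by metis
  define S where "S = (\<lambda>(b, i). (phi ^^ i) b) ` (n ` T \<times> {..<p})"
  define L where "L = generate G (S \<union> generate G {z})"
  have nT: "n ` T \<subseteq> N" using nj by auto
  have S: "finite S" "S \<subseteq> N" unfolding S_def using T(1) nT phi_funpow_mem by auto
  have A: "S \<union> generate G {z} \<subseteq> carrier G" using S(2) z_powers_subset N_carrier by blast
  have L: "subgroup L G" unfolding L_def using generate_is_subgroup[OF A] .
  have phi_A: "phi a \<in> S \<union> generate G {z}" if a: "a \<in> S \<union> generate G {z}" for a
  proof (cases "a \<in> S")
    case True
    then show ?thesis unfolding S_def using phi_mem_orbits nT N_carrier by blast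
  next
    case False
    then obtain i :: int where "a = z [^] i" using a mem_z_powers_iff by blast
    then show ?thesis using a phi_z_pow by simp
  qed
  have "phi l \<in> L" if "l \<in> L" for l
    unfolding L_def
    by (rule hom_generate_closed[OF phi_hom A]) (use phi_A that L_def in \<open>auto intro: generate.incl\<close>)
  then have PL: "subgroup (join_powers L x) G"
    using join_powers_subgroup[OF L x_mem_normalizer_if_phi_closed[OF L]] by blast
  have "n t \<in> L" if "t \<in> T" for t
    unfolding L_def S_def using that p_gt_1 by (intro generate.incl UnI1 image_eqI[of _ _ "(n t, 0)"]) auto
  then have "T \<subseteq> join_powers L x" using nj unfolding join_powers_def by blast
  then have "carrier G \<subseteq> join_powers L x" using generate_subgroup_incl[OF _ PL] T(3) by metis
  moreover have "L \<subseteq> N" "generate G {z} \<subseteq> L"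
    unfolding L_def using S(2) z_powers_subset generate_subgroup_incl[OF _ N_subgroup] mono_generate
      generate_subgroup_incl[OF _ z_powers_subgroup] by (auto intro: generate.incl)
  ultimately show ?thesis
    using N_subset_if_carrier_subset_join_powers[OF L] S unfolding L_def by blast
qed

lemma exists_exponent_into_z_powers:
  assumes fg: "finitely_generated_group G"
  shows "\<exists>E::int. 0 < E \<and> (\<forall>a\<in>N. a [^] E \<in> generate G {z})"
proof -
  obtain k :: int where k: "2 \<le> k" and dec: "\<forall>a\<in>N. \<exists>b\<in>N. \<exists>t::int. a = b [^] k \<otimes> z [^] t"
    using exists_kth_power_decomposition by blast
  obtain S where S: "finite S" "S \<subseteq> N" "N \<subseteq> generate G (S \<union> generate G {z})"
    using N_generated_over_z_powers[OF fg] by blast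
  have div: "\<exists>b\<in>N. a \<otimes> inv (b [^] k) \<in> generate G {z}" if a: "a \<in> N" for a
  proof -
    obtain b t where b: "b \<in> N" and at: "a = b [^] k \<otimes> z [^] (t::int)" using dec a by blast
    have bk: "b [^] k \<in> carrier G" using N_carrier[OF b] by simp
    have "a \<otimes> inv (b [^] k) = z [^] t"
      unfolding at using z_int_pow_central[OF bk, symmetric] bk z_carrier by (simp add: m_assoc)
    then show ?thesis using b mem_z_powers_iff by auto
  qed
  have "1 < k" using k by simp
  then obtain e where e: "e mod k = 1" "\<forall>a\<in>N. a [^] e \<in> generate G {z}"
    using exists_exponent_into_subgroup[OF N_subgroup N_comm _ S(1,2) z_powers_subgroup z_powers_subset
        div S(3)] by blast
  have "a [^] \<bar>e\<bar> \<in> generate G {z}" if a: "a \<in> N" for a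
  proof (cases "0 \<le> e")
    case False
    then have "a [^] \<bar>e\<bar> = inv (a [^] e)" using int_pow_neg N_carrier[OF a] by simp
    then show ?thesis using e(2) a subgroup.m_inv_closed[OF z_powers_subgroup] by simp
  qed (use e(2) a in simp)
  moreover have "0 < \<bar>e\<bar>" using e(1) k by (cases "e = 0") auto
  ultimately show ?thesis by blast
qed

lemma z_infinite_order:
  assumes fg: "finitely_generated_group G" and inf: "infinite (carrier G)"
    and E: "0 < E" "\<And>a. a \<in> N \<Longrightarrow> a [^] (E::int) \<in> generate G {z}"
    and i: "z [^] (i::int) = \<one>"
  shows "i = 0"
proof (rule ccontr)
  assume i0: "i \<noteq> 0"
  have ord: "ord z \<noteq> 0" using ord_ne_zero_if_int_pow_eq_one[OF z_carrier i i0] .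
  then have fin_z: "finite (generate G {z})"
    using generate_pow_card[OF z_carrier] card.infinite by force
  define n where "n = nat (E * int (ord z))"
  have n: "0 < n" "int n = E * int (ord z)" unfolding n_def using E(1) ord by simp_all
  have exp: "a [^] n = \<one>" if a: "a \<in> N" for a
  proof -
    obtain j where j: "a [^] E = z [^] (j::int)" using E(2)[OF a] mem_z_powers_iff by blast
    have "a [^] n = a [^] (E * int (ord z))" using int_pow_int n(2) by metis
    also have "\<dots> = (a [^] E) [^] int (ord z)" using int_pow_pow N_carrier[OF a] by simp
    also have "\<dots> = (z [^] int (ord z)) [^] j"
      unfolding j using int_pow_pow z_carrier by (simp add: mult.commute)
    also have "z [^] int (ord z) = \<one>" using pow_ord_eq_1[OF z_carrier] int_pow_int by metis
    finally show ?thesis by simp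
  qed
  obtain S where S: "finite S" "S \<subseteq> N" "N \<subseteq> generate G (S \<union> generate G {z})"
    using N_generated_over_z_powers[OF fg] by blast
  have "finite N"
    using finite_if_generated_over_finite[OF N_subgroup N_comm n(1) exp S(1,2) z_powers_subgroup
        z_powers_subset fin_z S(3)] .
  then have "finite (join_powers N x)"
    using join_powers_finite[OF N_subgroup _ x_carrier x_pow_p_mem] p_gt_1 by simp
  then show False using inf carrier_eq by simp
qed

lemma z_mem_join_powers:
  assumes E: "\<And>a. a \<in> N \<Longrightarrow> a [^] (E::int) \<in> generate G {z}"
  defines "q \<equiv> int p * E + 1"
  shows "z \<in> join_powers (kth_powers q) (x [^] q)"
proof -
  define y where "y = x [^] q"
  have y: "y = z [^] E \<otimes> x"
    unfolding y_def q_def using int_pow_mult[OF x_carrier] x_int_pow_mult_p x_carrier by simp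
  have yc: "y \<in> carrier G" unfolding y_def using x_carrier by simp
  have conj_y: "y \<otimes> g \<otimes> inv y = phi g" if g: "g \<in> carrier G" for g
  proof -
    have "y \<otimes> g \<otimes> inv y = z [^] E \<otimes> (x \<otimes> g \<otimes> inv x) \<otimes> inv (z [^] E)"
      unfolding y using x_carrier g z_carrier by (simp add: m_assoc inv_mult_group)
    also have "\<dots> = x \<otimes> g \<otimes> inv x"
      using z_int_pow_central[of "x \<otimes> g \<otimes> inv x" E] x_carrier g z_carrier by (simp add: m_assoc)
    finally show ?thesis unfolding phi_def .
  qed
  (* delta kills E-th powers, so c = a0^q has delta c = delta a0 \<noteq> \<one>. *)
  define c where "c = a0 [^] q"
  have c: "c \<in> kth_powers q" unfolding c_def using kth_powers_mem[OF a0_mem] .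
  have "delta (a0 [^] E) = \<one>"
  proof -
    obtain i where "a0 [^] E = z [^] (i::int)" using E[OF a0_mem] mem_z_powers_iff by blast
    then show ?thesis unfolding delta_def using phi_z_pow z_carrier by simp
  qed
  then have "delta c = delta a0"
    unfolding c_def q_def using delta_int_pow[OF a0_mem] N_carrier[OF delta_mem[OF a0_mem]]
    by (simp add: int_pow_mult mult.commute int_pow_pow[symmetric])
  moreover have cc: "c \<in> N" "c \<in> carrier G" unfolding c_def using N_int_pow[OF a0_mem] N_carrier by auto
  ultimately have cy: "c \<otimes> y \<noteq> y \<otimes> c"
    using conj_y[OF cc(2)] conj_eq_iff_commute[OF yc cc(2)] conj_eq_iff_commute[OF x_carrier cc(2)]
      delta_eq_one_iff[OF cc(1)] delta_eq_one_iff[OF a0_mem] x_a0_noncomm unfolding phi_def by metis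
  have M: "subgroup (join_powers (kth_powers q) y) G"
    using join_powers_subgroup[OF kth_powers_subgroup normal_mem_normalizer[OF kth_powers_normal yc]] .
  have "z \<in> normalizer G (join_powers (kth_powers q) y)"
    using commuting_mem_normalizer[OF subgroup.subset[OF M] z_carrier] z_central subgroup.mem_carrier[OF M]
    by blast
  then show ?thesis
    using mem_if_normalizes_nonabelian[OF M mem_join_powers[OF kth_powers_subgroup c]
        generator_mem_join_powers[OF kth_powers_subgroup yc] cy]
    unfolding y_def by blast
qed

lemma z_eq_pow_mult_z_pow:
  assumes E: "\<And>a. a \<in> N \<Longrightarrow> a [^] (E::int) \<in> generate G {z}"
  defines "q \<equiv> int p * E + 1"
  shows "\<exists>b\<in>N. \<exists>t::int. z = b [^] q \<otimes> z [^] (q * t)"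
proof -
  obtain b j where b: "b \<in> N" and zj: "z = b [^] q \<otimes> (x [^] q) [^] (j::int)"
    using z_mem_join_powers[OF E] unfolding q_def join_powers_def kth_powers_def by blast
  have bq: "b [^] q \<in> N" "b [^] q \<in> carrier G" using N_int_pow[OF b] N_carrier by auto
  have "(x [^] q) [^] j = x [^] (int p * (E * j) + j)"
    unfolding q_def using int_pow_pow[OF x_carrier] by (simp add: algebra_simps)
  also have "\<dots> = z [^] (E * j) \<otimes> x [^] j"
    using int_pow_mult[OF x_carrier] x_int_pow_mult_p by simp
  finally have xqj: "(x [^] q) [^] j = z [^] (E * j) \<otimes> x [^] j" .
  have "(x [^] q) [^] j = inv (b [^] q) \<otimes> z" using zj bq(2) x_carrier by simp
  then have "(x [^] q) [^] j \<in> N" using N_mult[OF N_inv[OF bq(1)] z_mem] by simp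
  moreover have "x [^] j = inv (z [^] (E * j)) \<otimes> (x [^] q) [^] j"
    unfolding xqj using z_carrier x_carrier by simp
  ultimately have "x [^] j \<in> N" using N_mult[OF N_inv[OF N_int_pow[OF z_mem]]] by simp
  then obtain t where t: "j = int p * t" using x_int_pow_mem_imp_dvd by blast
  have "(x [^] q) [^] j = z [^] (E * (int p * t)) \<otimes> z [^] t"
    using xqj unfolding t x_int_pow_mult_p .
  also have "\<dots> = z [^] (q * t)"
    unfolding q_def int_pow_mult[OF z_carrier, symmetric] by (simp add: algebra_simps)
  finally have xz: "(x [^] q) [^] j = z [^] (q * t)" .
  have "z = b [^] q \<otimes> z [^] (q * t)" using zj unfolding xz .
  then show ?thesis using b by blast
qed

lemma z_finite_order_if_exponent:
  assumes E: "0 < E" "\<And>a. a \<in> N \<Longrightarrow> a [^] (E::int) \<in> generate G {z}"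
  shows "\<exists>i::int. i \<noteq> 0 \<and> z [^] i = \<one>"
proof -
  define q where "q = int p * E + 1"
  obtain b t where b: "b \<in> N" and z_eq: "z = b [^] q \<otimes> z [^] (q * (t::int))"
    using z_eq_pow_mult_z_pow[OF E(2)] unfolding q_def by blast
  obtain i where i: "b [^] E = z [^] (i::int)" using E(2)[OF b] mem_z_powers_iff by blast
  have bq: "b [^] q \<in> carrier G" using N_carrier[OF b] by simp
  have "z [^] E = (b [^] q \<otimes> z [^] (q * t)) [^] E"
    using arg_cong[OF z_eq, of "\<lambda>w. w [^] E"] .
  also have "\<dots> = (b [^] q) [^] E \<otimes> (z [^] (q * t)) [^] E"
    using z_int_pow_central[OF bq, symmetric] bq z_carrier by (intro int_pow_mult_distrib) auto
  also have "(b [^] q) [^] E = (b [^] E) [^] q"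
    using int_pow_pow[OF N_carrier[OF b]] by (simp add: mult.commute)
  also have "\<dots> = z [^] (q * i)"
    unfolding i using int_pow_pow[OF z_carrier] by (simp add: mult.commute)
  also have "(z [^] (q * t)) [^] E = z [^] (q * (t * E))"
    using int_pow_pow[OF z_carrier] by (simp add: mult.assoc)
  finally have "z [^] E = z [^] (q * (i + t * E))"
    using int_pow_mult[OF z_carrier] by (simp add: distrib_left)
  then have "z [^] (E - q * (i + t * E)) = \<one>"
    using int_pow_diff[OF z_carrier] z_carrier by simp
  moreover have "\<not> q dvd E"
    using zdvd_not_zless[OF E(1)] p_gt_1 E(1) unfolding q_def by (simp add: pos_add_strict)
  then have "E - q * (i + t * E) \<noteq> 0" by (metis dvd_triv_left eq_iff_diff_eq_0)
  ultimately show ?thesis by blast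
qed

lemma finite_if_finitely_generated:
  assumes fg: "finitely_generated_group G"
  shows "finite (carrier G)"
proof (rule ccontr)
  assume "infinite (carrier G)"
  obtain E :: int where E: "0 < E" "\<forall>a\<in>N. a [^] E \<in> generate G {z}"
    using exists_exponent_into_z_powers[OF fg] by blast
  obtain i :: int where "i \<noteq> 0" "z [^] i = \<one>"
    using z_finite_order_if_exponent[OF E(1) E(2)[rule_format]] by blast
  then show False
    using z_infinite_order[OF fg \<open>infinite (carrier G)\<close> E(1) E(2)[rule_format]] by blast
qed

end

theorem theorem3p2:
  fixes G :: "('a, 'b) monoid_scheme"
  assumes "Yn_group G"
    and "infinite (carrier G)"
    and "finitely_generated_group G"
    and "solvable G"
  shows "comm_group G"
proof (rule ccontr)
  assume nc: "\<not> comm_group G"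
  have "group G" using assms(1) unfolding Yn_group_def by blast
  then interpret Yn_grp G
    by (rule Yn_grp.intro) (rule Yn_grp_axioms.intro[OF assms(1)])
  have "carrier G \<noteq> {\<one>\<^bsub>G\<^esub>}" using assms(2) by auto
  then obtain N x p a where "Yn_abelian_by_cyclic G N x p a"
    using exists_abelian_by_cyclic assms(4) nc by blast
  then have "finite (carrier G)"
    by (rule Yn_abelian_by_cyclic.finite_if_finitely_generated[OF _ assms(3)])
  then show False using assms(2) by simp
qed

end
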